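(* Let $\{X(t)\}_{t\ge 0}$ be generated by the voting diffusion model (defined in the context) with an arbitrary communicating pair process $\{\{i_1(t),i_2(t)\}\}$ and an arbitrary subject process $\{S(t)\}$, starting from an arbitrary (random) initial profile $X(0)\in\mathbb{R}^{m\times n}$. Then $\lim_{t\to\infty}X(t)$ exists almost surely.
   Context: Voting diffusion model: there are $m$ agents indexed by $[m]=\{1,\dots,m\}$ and $n$ candidates indexed by $[n]$. The opinion profile at time $t\in\{0,1,2,\dots\}$ is a random real $m\times n$ matrix $X(t)$, where $X_{ij}(t)$ is agent $i$'s score of candidate $j$. A communicating pair process is a sequence of random unordered pairs $\{i_1(t),i_2(t)\}$ with $i_1(t)\ne i_2(t)\in[m]$ (each measurable w.r.t. the discrete $\sigma$-algebra on the set of such pairs). A subject process is a sequence of random subsets $S(t)\subseteq[n]$ (measurable w.r.t. the power-set $\sigma$-algebra). No independence, stationarity, or adaptedness is assumed on either process; they may depend arbitrarily on the past, the future, or external randomness. The update is: $X_{ij}(t+1)=\tfrac12\big(X_{i_1(t)j}(t)+X_{i_2(t)j}(t)\big)$ if $i\in\{i_1(t),i_2(t)\}$ and $j\in S(t)$, and $X_{ij}(t+1)=X_{ij}(t)$ otherwise. *)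

theory Defs
  imports "HOL-Probability.Probability"
begin

text \<open>Agents are indexed by the finite type 'm,
candidates by the finite type 'n; an opinion profile is an m x n real matrix.
The communicating pair is an unordered pair, represented as a 2-element set P of agents.\<close>

definition voting_step ::
  "real ^ 'n ^ 'm \<Rightarrow> 'm set \<Rightarrow> 'n set \<Rightarrow> real ^ 'n ^ 'm" where
  "voting_step X P S =
     (\<chi> i j. if i \<in> P \<and> j \<in> S then (\<Sum>k\<in>P. X $ k $ j) / 2 else X $ i $ j)"

end

theory Submission imports Defs begin

(* Every trajectory of the voting diffusion model converges; no probabilistic
   assumption is needed, so the almost-sure statement holds pathwise.
   The candidates evolve independently, so it suffices to study one column
   x t :: 'm => real, which at each step is either unchanged or has two of its
   entries replaced by their average ("averaging step").  For such a sequence: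
   (1) the top-k sum T(x,k), the largest sum of k entries, is nonincreasing and
       bounded below, hence converges to some limit tau k;
   (2) the energy sum_i (x i)^2 drops by at least 2 (y i - x i)^2 in a step,
       so the increments of every entry tend to 0;
   (3) every entry x i is a slope (T(x,b) - T(x,a)) / (b - a) with a < b, so
       eventually every entry lies close to the finite set L of limiting
       slopes (tau b - tau a) / (b - a);
   (4) an entry that is close to the finite set L and moves by small steps
       cannot jump between points of L, so it converges. *)

section \<open>Averaging steps\<close>

definition avg_pair :: "('m \<Rightarrow> real) \<Rightarrow> 'm \<Rightarrow> 'm \<Rightarrow> 'm \<Rightarrow> real" where
  "avg_pair x a b = (\<lambda>i. if i = a \<or> i = b then (x a + x b) / 2 else x i)"

lemma avg_pair_commute: "avg_pair x a b = avg_pair x b a"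
  by (auto simp: avg_pair_def)

definition averaging_step :: "('m \<Rightarrow> real) \<Rightarrow> ('m \<Rightarrow> real) \<Rightarrow> bool" where
  "averaging_step x y \<longleftrightarrow> y = x \<or> (\<exists>a b. a \<noteq> b \<and> y = avg_pair x a b)"

lemma averaging_step_lower_bound:
  assumes "averaging_step x y" "\<And>i. lo \<le> x i"
  shows "lo \<le> y i"
proof -
  have "lo \<le> (x a + x b) / 2" for a b using assms(2)[of a] assms(2)[of b] by simp
  then show ?thesis using assms unfolding averaging_step_def avg_pair_def by auto
qed

lemma averaging_step_energy:
  fixes x y :: "'m::finite \<Rightarrow> real"
  assumes "averaging_step x y"
  shows "2 * (y i - x i)^2 \<le> (\<Sum>j\<in>UNIV. (x j)^2) - (\<Sum>j\<in>UNIV. (y j)^2)"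
proof (cases "y = x")
  case False
  then obtain a b where ab: "a \<noteq> b" and y: "y = avg_pair x a b"
    using assms unfolding averaging_step_def by blast
  have split: "(\<Sum>j\<in>UNIV. f j) = (\<Sum>j\<in>UNIV - {a,b}. f j) + f a + f b" for f :: "'m \<Rightarrow> real"
    using sum.subset_diff[of "{a,b}" UNIV f] ab by (simp add: add.commute)
  have rest: "(\<Sum>j\<in>UNIV - {a,b}. (y j)^2) = (\<Sum>j\<in>UNIV - {a,b}. (x j)^2)"
    by (rule sum.cong) (auto simp: y avg_pair_def)
  have "(\<Sum>j\<in>UNIV. (x j)^2) - (\<Sum>j\<in>UNIV. (y j)^2) = (x a)^2 + (x b)^2 - 2 * ((x a + x b) / 2)^2"
    using split[of "\<lambda>j. (x j)^2"] split[of "\<lambda>j. (y j)^2"] rest ab by (simp add: y avg_pair_def)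
  also have "\<dots> = (x a - x b)^2 / 2" by (simp add: power2_eq_square field_simps)
  finally have drop: "(\<Sum>j\<in>UNIV. (x j)^2) - (\<Sum>j\<in>UNIV. (y j)^2) = (x a - x b)^2 / 2" .
  have "2 * (y i - x i)^2 \<le> (x a - x b)^2 / 2"
  proof (cases "i = a \<or> i = b")
    case True
    then show ?thesis by (auto simp: y avg_pair_def power2_eq_square field_simps)
  qed (simp add: y avg_pair_def)
  then show ?thesis using drop by simp
qed simp

section \<open>Top-k sums\<close>

definition top_sum :: "('m::finite \<Rightarrow> real) \<Rightarrow> nat \<Rightarrow> real" where
  "top_sum x k = Max (sum x ` {A. card A = k})"

lemma top_sum_ge: "card A = k \<Longrightarrow> sum x A \<le> top_sum x k"
  unfolding top_sum_def by (rule Max_ge) auto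

lemma top_sum_attained:
  fixes x :: "'m::finite \<Rightarrow> real"
  assumes "k \<le> CARD('m)"
  obtains A :: "'m set" where "card A = k" "top_sum x k = sum x A"
proof -
  obtain B :: "'m set" where "card B = k"
    using obtain_subset_with_card_n[OF assms] by blast
  then have "top_sum x k \<in> sum x ` {A :: 'm set. card A = k}"
    unfolding top_sum_def by (intro Max_in) auto
  then show ?thesis using that by auto
qed

lemma top_sum_le:
  assumes "k \<le> CARD('m::finite)" "\<And>A :: 'm set. card A = k \<Longrightarrow> sum x A \<le> c"
  shows "top_sum x k \<le> c"
  using top_sum_attained[OF assms(1), of x] assms(2) by metis

lemma sum_avg_pair_exchange:
  assumes "finite A" "a \<in> A" "b \<notin> A"
  shows "sum (avg_pair x a b) A = (sum x A + sum x (insert b (A - {a}))) / 2"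
proof -
  have rest: "sum (avg_pair x a b) (A - {a}) = sum x (A - {a})"
    by (rule sum.cong) (use assms in \<open>auto simp: avg_pair_def\<close>)
  show ?thesis
    using assms rest by (simp add: sum.remove[of A a] avg_pair_def field_simps)
qed

lemma sum_avg_pair_unchanged:
  assumes "finite A" "a \<noteq> b" "a \<in> A \<longleftrightarrow> b \<in> A"
  shows "sum (avg_pair x a b) A = sum x A"
proof (cases "a \<in> A")
  case True
  have rest: "sum (avg_pair x a b) (A - {a,b}) = sum x (A - {a,b})"
    by (rule sum.cong) (auto simp: avg_pair_def)
  have "sum f A = sum f (A - {a,b}) + f a + f b" for f :: "_ \<Rightarrow> real"
    using sum.subset_diff[of "{a,b}" A f] True assms by (simp add: add.commute)
  then show ?thesis using rest assms by (simp add: avg_pair_def)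
qed (use assms in \<open>auto intro!: sum.cong simp: avg_pair_def\<close>)

lemma top_sum_averaging_step:
  assumes "averaging_step x y" "k \<le> CARD('m::finite)"
  shows "top_sum y k \<le> top_sum (x :: 'm \<Rightarrow> real) k"
proof (rule top_sum_le[OF assms(2)])
  fix A :: "'m set" assume cA: "card A = k"
  have exchange: "sum (avg_pair x a b) A \<le> top_sum x k" if "a \<in> A" "b \<notin> A" for a b
  proof -
    have "k > 0" using that cA by (auto simp: card_gt_0_iff)
    then have "card (insert b (A - {a})) = k"
      using that cA by (simp add: card_Diff_singleton)
    then show ?thesis using that sum_avg_pair_exchange[of A a b x] top_sum_ge[OF cA, of x]
        top_sum_ge[of "insert b (A - {a})" k x] by simp
  qed
  show "sum y A \<le> top_sum x k"
  proof (cases "y = x")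
    case False
    then obtain a b where ab: "a \<noteq> b" and y: "y = avg_pair x a b"
      using assms(1) unfolding averaging_step_def by blast
    consider "a \<in> A \<longleftrightarrow> b \<in> A" | "a \<in> A" "b \<notin> A" | "b \<in> A" "a \<notin> A" by blast
    then show ?thesis
    proof cases
      case 1
      then show ?thesis using sum_avg_pair_unchanged[of A a b x] ab top_sum_ge[OF cA] y by simp
    qed (use exchange y avg_pair_commute in metis)+
  qed (use top_sum_ge[OF cA] in simp)
qed

lemma top_sum_upper_set:
  fixes y :: "'m::finite \<Rightarrow> real"
  assumes upper: "\<And>i j. i \<in> A \<Longrightarrow> j \<notin> A \<Longrightarrow> y j \<le> y i"
  shows "top_sum y (card A) = sum y A"
proof (rule antisym)
  show "top_sum y (card A) \<le> sum y A"
  proof (rule top_sum_le)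
    show "card A \<le> CARD('m)" by (simp add: card_mono)
    fix C :: "'m set" assume cC: "card C = card A"
    have sC: "sum y C = sum y (C \<inter> A) + sum y (C - A)"
      by (metis Int_commute finite sum.Int_Diff)
    have sA: "sum y A = sum y (C \<inter> A) + sum y (A - C)"
      by (metis Int_commute finite sum.Int_Diff)
    have cards: "card (C - A) = card (A - C)"
      using cC card_Int_Diff[of C A] card_Int_Diff[of A C] by (simp add: Int_commute)
    have "sum y (C - A) \<le> sum y (A - C)"
    proof (cases "C - A = {}")
      case True
      then have "A - C = {}" using cards by (metis card_0_eq finite card.empty)
      with True show ?thesis by simp
    next
      case False
      define m where "m = Max (y ` (C - A))"
      have "m \<in> y ` (C - A)" unfolding m_def using False by (intro Max_in) auto
      then obtain j0 where j0: "j0 \<in> C - A" "m = y j0" by auto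
      have "sum y (C - A) \<le> of_nat (card (C - A)) * m"
        using sum_bounded_above[of "C - A" y m] unfolding m_def by auto
      also have "\<dots> = of_nat (card (A - C)) * m" using cards by simp
      also have "\<dots> \<le> sum y (A - C)"
        using sum_bounded_below[of "A - C" m y] upper j0 by auto
      finally show ?thesis .
    qed
    then show "sum y C \<le> sum y A" using sC sA by simp
  qed
qed (rule top_sum_ge, simp)

text \<open>Every entry is a slope of the function k \<mapsto> top_sum y k: take the sets of
  entries strictly above, resp. at least, y i.\<close>
lemma entry_is_top_sum_slope:
  fixes y :: "'m::finite \<Rightarrow> real"
  obtains a b where "a < b" "b \<le> CARD('m)"
    "top_sum y b - top_sum y a = (real b - real a) * y i"
proof -
  define A where "A = {j. y j > y i}"
  define B where "B = {j. y j \<ge> y i}"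
  have AB: "A \<subset> B" unfolding A_def B_def by force
  have TA: "top_sum y (card A) = sum y A" by (rule top_sum_upper_set) (auto simp: A_def)
  have TB: "top_sum y (card B) = sum y B" by (rule top_sum_upper_set) (auto simp: B_def)
  have "sum y B = sum y A + sum y (B - A)"
    using AB by (metis finite psubset_imp_subset sum.subset_diff add.commute)
  moreover have "sum y (B - A) = sum (\<lambda>_. y i) (B - A)"
    by (rule sum.cong) (auto simp: A_def B_def)
  moreover have "real (card (B - A)) = real (card B) - real (card A)"
    using AB by (simp add: card_Diff_subset of_nat_diff psubset_imp_subset card_mono)
  ultimately have "top_sum y (card B) - top_sum y (card A) = (real (card B) - real (card A)) * y i"
    using TA TB by simp
  moreover have "card A < card B" using AB by (simp add: psubset_card_mono)
  moreover have "card B \<le> CARD('m)" by (simp add: card_mono)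
  ultimately show ?thesis using that by blast
qed

section \<open>Convergence of averaging sequences\<close>

locale averaging_sequence =
  fixes x :: "nat \<Rightarrow> 'm::finite \<Rightarrow> real"
  assumes step: "\<And>t. averaging_step (x t) (x (Suc t))"
begin

lemma lower_bound: "Min (range (x 0)) \<le> x t i"
proof (induction t arbitrary: i)
  case (Suc t) then show ?case using averaging_step_lower_bound[OF step] by blast
qed simp

definition tau :: "nat \<Rightarrow> real" where
  "tau k = lim (\<lambda>t. top_sum (x t) k)"

lemma top_sum_tendsto:
  assumes "k \<le> CARD('m)"
  shows "(\<lambda>t. top_sum (x t) k) \<longlonglongrightarrow> tau k"
proof -
  have decreasing: "decseq (\<lambda>t. top_sum (x t) k)"
    by (rule decseq_SucI) (rule top_sum_averaging_step[OF step assms])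
  have bounded: "real k * Min (range (x 0)) \<le> top_sum (x t) k" for t
  proof -
    obtain A :: "'m set" where A: "card A = k"
      using obtain_subset_with_card_n[OF assms] by blast
    have "real k * Min (range (x 0)) \<le> sum (x t) A"
      using sum_bounded_below[of A "Min (range (x 0))" "x t"] lower_bound A by auto
    also have "\<dots> \<le> top_sum (x t) k" by (rule top_sum_ge[OF A])
    finally show ?thesis .
  qed
  obtain L where "(\<lambda>t. top_sum (x t) k) \<longlonglongrightarrow> L"
    using decseq_convergent[OF decreasing] bounded by blast
  then show ?thesis unfolding tau_def by (simp add: limI)
qed

text \<open>The increments of every entry tend to zero, by energy dissipation.\<close>
lemma increments_vanish:
  assumes "e > 0"
  shows "eventually (\<lambda>t. \<forall>i. \<bar>x (Suc t) i - x t i\<bar> < e) sequentially"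
proof -
  define Q where "Q t = (\<Sum>j\<in>UNIV. (x t j)^2)" for t
  have drop: "2 * (x (Suc t) i - x t i)^2 \<le> Q t - Q (Suc t)" for t i
    unfolding Q_def by (rule averaging_step_energy[OF step])
  have "Q (Suc t) \<le> Q t" for t
    using drop[of t undefined] zero_le_power2[of "x (Suc t) undefined - x t undefined"] by linarith
  then have "decseq Q" by (rule decseq_SucI)
  moreover have "\<forall>t. 0 \<le> Q t" unfolding Q_def by (simp add: sum_nonneg)
  ultimately obtain q where "Q \<longlonglongrightarrow> q" by (rule decseq_convergent)
  then have "(\<lambda>t. Q t - Q (Suc t)) \<longlonglongrightarrow> q - q"
    by (intro tendsto_diff) (auto simp: LIMSEQ_Suc)
  then have "eventually (\<lambda>t. Q t - Q (Suc t) < 2 * e^2) sequentially"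
    using assms by (intro order_tendstoD) auto
  then show ?thesis
  proof (rule eventually_mono)
    fix t assume small: "Q t - Q (Suc t) < 2 * e^2"
    show "\<forall>i. \<bar>x (Suc t) i - x t i\<bar> < e"
    proof
      fix i
      have "(x (Suc t) i - x t i)^2 < e^2" using drop[of t i] small by simp
      then show "\<bar>x (Suc t) i - x t i\<bar> < e" using assms by (simp add: power2_less_imp_less)
    qed
  qed
qed

definition slopes :: "real set" where
  "slopes = (\<lambda>(a, b). (tau b - tau a) / (real b - real a)) ` {(a, b). a < b \<and> b \<le> CARD('m)}"

lemma finite_slopes: "finite slopes"
proof -
  have "{(a, b). a < b \<and> b \<le> CARD('m)} \<subseteq> {..CARD('m)} \<times> {..CARD('m)}" by auto
  then have "finite {(a :: nat, b). a < b \<and> b \<le> CARD('m)}" by (rule finite_subset) simp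
  then show ?thesis unfolding slopes_def by simp
qed

lemma eventually_near_slopes:
  assumes "e > 0"
  shows "eventually (\<lambda>t. \<forall>i. \<exists>l\<in>slopes. \<bar>x t i - l\<bar> < e) sequentially"
proof -
  have "eventually (\<lambda>t. \<forall>k\<in>{..CARD('m)}. \<bar>top_sum (x t) k - tau k\<bar> < e/2) sequentially"
  proof (rule eventually_ball_finite)
    show "\<forall>k\<in>{..CARD('m)}. eventually (\<lambda>t. \<bar>top_sum (x t) k - tau k\<bar> < e/2) sequentially"
    proof
      fix k assume "k \<in> {..CARD('m)}"
      then have "(\<lambda>t. top_sum (x t) k) \<longlonglongrightarrow> tau k" by (intro top_sum_tendsto) simp
      then show "eventually (\<lambda>t. \<bar>top_sum (x t) k - tau k\<bar> < e/2) sequentially"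
        using assms by (auto dest!: tendstoD[where e="e/2"] simp: dist_real_def)
    qed
  qed simp
  then show ?thesis
  proof (rule eventually_mono)
    fix t assume close: "\<forall>k\<in>{..CARD('m)}. \<bar>top_sum (x t) k - tau k\<bar> < e/2"
    show "\<forall>i. \<exists>l\<in>slopes. \<bar>x t i - l\<bar> < e"
    proof
      fix i
      obtain a b where ab: "a < b" "b \<le> CARD('m)"
        and slope: "top_sum (x t) b - top_sum (x t) a = (real b - real a) * x t i"
        by (rule entry_is_top_sum_slope)
      define l where "l = (tau b - tau a) / (real b - real a)"
      have "l \<in> slopes" unfolding slopes_def l_def using ab by force
      have gap: "real b - real a \<ge> 1" using ab by linarith
      define d where "d = (top_sum (x t) b - tau b) - (top_sum (x t) a - tau a)"
      have "\<bar>top_sum (x t) a - tau a\<bar> < e/2" "\<bar>top_sum (x t) b - tau b\<bar> < e/2"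
        using close ab by auto
      then have "\<bar>d\<bar> < e" unfolding d_def by linarith
      have "x t i - l = d / (real b - real a)"
        using slope gap unfolding l_def d_def by (simp add: field_simps)
      moreover have "\<bar>d\<bar> * 1 \<le> \<bar>d\<bar> * (real b - real a)"
        using gap by (intro mult_left_mono) auto
      ultimately have "\<bar>x t i - l\<bar> \<le> \<bar>d\<bar>"
        using gap by (simp add: abs_divide divide_le_eq)
      then show "\<exists>l\<in>slopes. \<bar>x t i - l\<bar> < e" using \<open>l \<in> slopes\<close> \<open>\<bar>d\<bar> < e\<close> by force
    qed
  qed
qed

text \<open>Each entry converges: once it is within a third of the minimal gap of the
  finite set of slopes and moves by less than that, it is trapped near one slope.\<close>
lemma convergent_entry: "convergent (\<lambda>t. x t i)"
proof -
  define gaps where "gaps = (\<lambda>(l, l'). \<bar>l - l'\<bar>) ` {(l, l'). l \<in> slopes \<and> l' \<in> slopes \<and> l \<noteq> l'}"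
  have "finite gaps" unfolding gaps_def
    by (rule finite_imageI, rule finite_subset[of _ "slopes \<times> slopes"]) (auto simp: finite_slopes)
  define \<delta> where "\<delta> = Min (insert 1 gaps)"
  have "\<delta> > 0" unfolding \<delta>_def using \<open>finite gaps\<close> by (auto simp: gaps_def)
  have separated: "\<delta> \<le> \<bar>l - l'\<bar>" if "l \<in> slopes" "l' \<in> slopes" "l \<noteq> l'" for l l'
    unfolding \<delta>_def using \<open>finite gaps\<close> that by (intro Min_le) (auto simp: gaps_def)
  have "Cauchy (\<lambda>t. x t i)"
  proof (rule CauchyI)
    fix e :: real assume "e > 0"
    define \<epsilon> where "\<epsilon> = min (e/2) (\<delta>/3)"
    have "\<epsilon> > 0" using \<open>e > 0\<close> \<open>\<delta> > 0\<close> by (simp add: \<epsilon>_def)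
    obtain N where N: "\<And>t. t \<ge> N \<Longrightarrow>
        (\<forall>i. \<exists>l\<in>slopes. \<bar>x t i - l\<bar> < \<epsilon>) \<and> (\<forall>i. \<bar>x (Suc t) i - x t i\<bar> < \<epsilon>)"
      using eventually_conj[OF eventually_near_slopes increments_vanish, OF \<open>\<epsilon> > 0\<close> \<open>\<epsilon> > 0\<close>]
      unfolding eventually_sequentially by blast
    obtain l0 where l0: "l0 \<in> slopes" "\<bar>x N i - l0\<bar> < \<epsilon>" using N[of N] by blast
    have trapped: "\<bar>x t i - l0\<bar> < \<epsilon>" if "t \<ge> N" for t
      using that
    proof (induction t rule: dec_induct)
      case (step t)
      obtain l where l: "l \<in> slopes" "\<bar>x (Suc t) i - l\<bar> < \<epsilon>" using N[of "Suc t"] step(1) by auto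
      have "\<bar>x (Suc t) i - x t i\<bar> < \<epsilon>" using N[of t] step(1) by auto
      then have "\<bar>l - l0\<bar> < \<delta>" using l step(3) unfolding \<epsilon>_def by linarith
      then have "l = l0" using separated[OF l(1) l0(1)] by fastforce
      then show ?case using l by simp
    qed (use l0 in simp)
    show "\<exists>M. \<forall>m\<ge>M. \<forall>n\<ge>M. norm (x m i - x n i) < e"
    proof (intro exI allI impI)
      fix m n assume "m \<ge> N" "n \<ge> N"
      then show "norm (x m i - x n i) < e"
        using trapped[of m] trapped[of n] unfolding \<epsilon>_def real_norm_def by linarith
    qed
  qed
  then show ?thesis by (simp add: Cauchy_convergent_iff)
qed

end

section \<open>The voting diffusion model\<close>

lemma voting_step_column:
  assumes "card P = 2"
  shows "averaging_step (\<lambda>i. X $ i $ j) (\<lambda>i. voting_step X P S $ i $ j)"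
proof -
  obtain a b where ab: "a \<noteq> b" "P = {a, b}" using assms card_2_iff by metis
  show ?thesis
  proof (cases "j \<in> S")
    case True
    then show ?thesis unfolding averaging_step_def avg_pair_def using ab
      by (intro disjI2 exI[of _ a] exI[of _ b]) (auto simp: voting_step_def)
  qed (simp add: averaging_step_def voting_step_def)
qed

lemma convergent_vec:
  fixes f :: "nat \<Rightarrow> 'a::t2_space ^ 'i"
  assumes "\<And>i. convergent (\<lambda>t. f t $ i)"
  shows "convergent f"
proof -
  have "f \<longlonglongrightarrow> (\<chi> i. lim (\<lambda>t. f t $ i))"
    using assms by (intro vec_tendstoI) (simp add: convergent_LIMSEQ_iff)
  then show ?thesis by (auto simp: convergent_def)
qed

theorem theorem1:
  fixes M :: "'w measure"
    and X :: "nat \<Rightarrow> 'w \<Rightarrow> real ^ 'n ^ 'm"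
    and P :: "nat \<Rightarrow> 'w \<Rightarrow> 'm set"
    and S :: "nat \<Rightarrow> 'w \<Rightarrow> 'n set"
  assumes "prob_space M"
    and "X 0 \<in> borel_measurable M"
    and "\<And>t. P t \<in> measurable M (count_space UNIV)"
    and "\<And>t \<omega>. card (P t \<omega>) = 2"
    and "\<And>t. S t \<in> measurable M (count_space UNIV)"
    and "\<And>t \<omega>. X (Suc t) \<omega> = voting_step (X t \<omega>) (P t \<omega>) (S t \<omega>)"
  shows "AE \<omega> in M. convergent (\<lambda>t. X t \<omega>)"
proof (rule AE_I2)
  fix \<omega>
  have "averaging_sequence (\<lambda>t i. X t \<omega> $ i $ j)" for j
    by unfold_locales (simp add: assms(6) voting_step_column[OF assms(4)])
  then have "convergent (\<lambda>t. X t \<omega> $ i $ j)" for i j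
    by (rule averaging_sequence.convergent_entry)
  then show "convergent (\<lambda>t. X t \<omega>)"
    by (intro convergent_vec)
qed

end
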